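(* Let $A=\mathrm{diag}(1,\kappa,\dots,\kappa)\in\mathbb{R}^{d\times d}$ with $\kappa\ge 10$, $h>0$, and let $\alpha_1,\alpha_{-1}\in\mathbb{R}$, $\beta_1,\beta_{-1}\ge0$ be parameters (possibly depending on $d,\kappa,h$) satisfying $|\alpha_{-1}|\le\frac35\beta_{-1}^2\kappa$, $|\alpha_1|\le C|\alpha_{-1}|$ and $\beta_1\le C\beta_{-1}$ for a fixed constant $C$, and $\beta_{-1}\sqrt{\kappa d/\log d}\to\infty$ as $d\to\infty$. Let $x\in\mathbb{R}^d$ satisfy $\|x_{-1}\|_2\le\sqrt{2d/(3\kappa)}$ and $|x_1|\le5\sqrt{\log d}$, let $g\sim\mathcal N(0,I_d)$ and $y_1=(1-\alpha_1)x_1+\beta_1g_1$, $y_{-1}=(1-\alpha_{-1})x_{-1}+\beta_{-1}g_{-1}$. Then there exist $c>0$ and $d_0$ (depending only on $C$ and on the rate at which $\beta_{-1}\sqrt{\kappa d/\log d}\to\infty$) such that for $d\ge d_0$, with probability at least $1-d^{-5}$ over $g$, $$\frac h4\|x\|_{A^2}^2-\frac h4\|y\|_{A^2}^2\le -c\,h\kappa^2\beta_{-1}^2d.$$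
   Context: $\|x\|_M=\sqrt{x^\top Mx}$ for positive semidefinite $M$. For $v\in\mathbb{R}^d$, $v_1$ is its first coordinate and $v_{-1}\in\mathbb{R}^{d-1}$ its remaining coordinates. *)

theory Defs
  imports "HOL-Probability.Probability"
begin

text \<open>Vectors in R^d are functions nat => real, coordinates indexed 0..d-1;
  coordinate 0 is the "first" coordinate v_1, coordinates 1..d-1 form v_{-1}.\<close>

definition Amat :: "real \<Rightarrow> nat \<Rightarrow> nat \<Rightarrow> real" where
  "Amat \<kappa> i j = (if i = j then (if i = 0 then 1 else \<kappa>) else 0)"

definition mat_mul :: "nat \<Rightarrow> (nat \<Rightarrow> nat \<Rightarrow> real) \<Rightarrow> (nat \<Rightarrow> nat \<Rightarrow> real) \<Rightarrow> nat \<Rightarrow> nat \<Rightarrow> real" where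
  "mat_mul d M N i j = (\<Sum>k<d. M i k * N k j)"

definition Mnorm :: "nat \<Rightarrow> (nat \<Rightarrow> nat \<Rightarrow> real) \<Rightarrow> (nat \<Rightarrow> real) \<Rightarrow> real" where
  "Mnorm d M x = sqrt (\<Sum>i<d. \<Sum>j<d. x i * M i j * x j)"

definition norm_tail :: "nat \<Rightarrow> (nat \<Rightarrow> real) \<Rightarrow> real" where
  "norm_tail d v = sqrt (\<Sum>i\<in>{1..<d}. (v i)\<^sup>2)"

definition gauss :: "nat \<Rightarrow> (nat \<Rightarrow> real) measure" where
  "gauss d = PiM {..<d} (\<lambda>_. density lborel std_normal_density)"

definition ystep :: "real \<Rightarrow> real \<Rightarrow> real \<Rightarrow> real \<Rightarrow> (nat \<Rightarrow> real) \<Rightarrow> (nat \<Rightarrow> real) \<Rightarrow> nat \<Rightarrow> real" where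
  "ystep \<alpha>1 \<alpha>m \<beta>1 \<beta>m x g i =
     (if i = 0 then (1 - \<alpha>1) * x 0 + \<beta>1 * g 0 else (1 - \<alpha>m) * x i + \<beta>m * g i)"

end

theory Submission
  imports Defs "HOL-Real_Asymp.Real_Asymp"
begin

(* Since A^2 = diag(1, kappa^2, ..., kappa^2), the energy of y exceeds that of x by at least
   kappa^2 (S - |x_{-1}|^2) - x_1^2, where S = |(1 - alpha_{-1}) x_{-1} + beta_{-1} g_{-1}|^2 is a
   noncentral chi-square variable.  Its lower tail is bounded by a Chernoff argument: the Gaussian
   expectation of exp (-t (v + b z)^2) is explicit (complete the square), and for 2 t beta_{-1}^2 =
   min (1/20, kappa beta_{-1}^2 / 20) the Chernoff exponent is at most -5 log d, because the injected
   noise beta_{-1}^2 d dominates both the contraction |alpha_{-1}| |x_{-1}|^2 <= (2/5) beta_{-1}^2 d and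
   the first coordinate x_1^2 <= 25 log d.  Outside this event of probability at most d^-5,
   S >= |x_{-1}|^2 + 25 log d / kappa^2 + beta_{-1}^2 d / 50, which gives the claim with c = 1/200. *)

lemma std_normal_density_times_exp_neg_square:
  fixes t b v z :: real
  assumes "t \<ge> 0"
  defines "u \<equiv> 1 + 2 * t * b\<^sup>2"
  shows "std_normal_density z * exp (- t * (v + b * z)\<^sup>2)
       = exp (- ln u / 2 - t * v\<^sup>2 / u) * normal_density (- 2 * t * b * v / u) (1 / sqrt u) z"
proof -
  have u: "u \<ge> 1" using assms by simp
  define m where "m = - 2 * t * b * v / u"
  have zm: "(z - m) * u = z * u + 2 * t * b * v"
    using u unfolding m_def by (simp add: field_simps)
  have "2 * u * (- z\<^sup>2 / 2 - t * (v + b * z)\<^sup>2) = - 2 * t * v\<^sup>2 - ((z - m) * u)\<^sup>2"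
    unfolding zm by (simp add: u_def algebra_simps power2_eq_square)
  then have exponent: "- z\<^sup>2 / 2 - t * (v + b * z)\<^sup>2 = - t * v\<^sup>2 / u - (z - m)\<^sup>2 * u / 2"
    using u by (simp add: field_simps power2_eq_square)
  have prefactor: "exp (- ln u / 2 - t * v\<^sup>2 / u) = exp (- t * v\<^sup>2 / u) / sqrt u"
  proof -
    have "exp (- ln u / 2 - t * v\<^sup>2 / u) = exp (- t * v\<^sup>2 / u) / exp (ln u / 2)"
      by (simp add: exp_diff[symmetric])
    also have "exp (ln u / 2) = sqrt u"
      using u by (simp add: powr_half_sqrt[symmetric] powr_def)
    finally show ?thesis .
  qed
  have density: "normal_density m (1 / sqrt u) z = sqrt u / sqrt (2 * pi) * exp (- (z - m)\<^sup>2 * u / 2)"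
    using u by (simp add: normal_density_def power_divide real_sqrt_divide real_sqrt_mult field_simps)
  have "std_normal_density z * exp (- t * (v + b * z)\<^sup>2)
      = 1 / sqrt (2 * pi) * exp (- t * v\<^sup>2 / u) * exp (- (z - m)\<^sup>2 * u / 2)"
    unfolding std_normal_density_def using exponent by (simp add: mult_exp_exp)
  also have "\<dots> = exp (- t * v\<^sup>2 / u) / sqrt u * (sqrt u / sqrt (2 * pi) * exp (- (z - m)\<^sup>2 * u / 2))"
    using u by simp
  also have "\<dots> = exp (- ln u / 2 - t * v\<^sup>2 / u) * normal_density m (1 / sqrt u) z"
    unfolding prefactor density ..
  finally show ?thesis
    unfolding m_def .
qed

lemma nn_integral_std_normal_exp_neg_square:
  fixes t b v :: real
  assumes "t \<ge> 0"
  defines "u \<equiv> 1 + 2 * t * b\<^sup>2"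
  shows "(\<integral>\<^sup>+ z. ennreal (exp (- t * (v + b * z)\<^sup>2)) \<partial>density lborel std_normal_density)
       = ennreal (exp (- ln u / 2 - t * v\<^sup>2 / u))"
proof -
  define K where "K = exp (- ln u / 2 - t * v\<^sup>2 / u)"
  define m where "m = - 2 * t * b * v / u"
  have s: "1 / sqrt u > 0" using assms by (simp add: add_pos_nonneg)
  have "(\<integral>\<^sup>+ z. ennreal (exp (- t * (v + b * z)\<^sup>2)) \<partial>density lborel std_normal_density)
      = (\<integral>\<^sup>+ z. ennreal (std_normal_density z * exp (- t * (v + b * z)\<^sup>2)) \<partial>lborel)"
    by (subst nn_integral_density) (auto simp flip: ennreal_mult)
  also have "\<dots> = (\<integral>\<^sup>+ z. ennreal K * ennreal (normal_density m (1 / sqrt u) z) \<partial>lborel)"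
    using std_normal_density_times_exp_neg_square[OF assms(1)]
    by (simp add: K_def m_def u_def ennreal_mult)
  also have "\<dots> = ennreal K * (\<integral>\<^sup>+ z. ennreal (normal_density m (1 / sqrt u) z) \<partial>lborel)"
    by (rule nn_integral_cmult) auto
  also have "(\<integral>\<^sup>+ z. ennreal (normal_density m (1 / sqrt u) z) \<partial>lborel) = 1"
    using integral_normal_density[OF s] integrable_normal_density[OF s]
    by (subst nn_integral_eq_integral) auto
  finally show ?thesis
    unfolding K_def by simp
qed

lemma prob_space_gauss: "prob_space (gauss d)"
  unfolding gauss_def by (intro prob_space_PiM prob_space_normal_density) simp

lemma measurable_gauss_component [measurable]:
  "i < d \<Longrightarrow> (\<lambda>g. g i) \<in> borel_measurable (gauss d)"
  unfolding gauss_def by measurable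

lemma nn_integral_gauss_prod:
  assumes "I \<subseteq> {..<d}" and [measurable]: "\<And>i. i \<in> I \<Longrightarrow> f i \<in> borel_measurable borel"
  shows "(\<integral>\<^sup>+ g. (\<Prod>i\<in>I. f i (g i)) \<partial>gauss d)
       = (\<Prod>i\<in>I. \<integral>\<^sup>+ z. f i z \<partial>density lborel std_normal_density)"
proof -
  define N where "N = density lborel std_normal_density"
  have N: "prob_space N" unfolding N_def by (rule prob_space_normal_density) simp
  interpret product_prob_space "\<lambda>_. N" "{..<d}"
    by (intro product_prob_space.intro product_sigma_finite.intro product_prob_space_axioms.intro
        prob_space_imp_sigma_finite N)
  define F where "F i z = (if i \<in> I then f i z else 1)" for i z
  have [measurable]: "F i \<in> borel_measurable borel" for i
    unfolding F_def by (cases "i \<in> I") simp_all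
  have restrict: "I = {..<d} \<inter> I" using assms(1) by blast
  have "(\<integral>\<^sup>+ g. (\<Prod>i\<in>I. f i (g i)) \<partial>gauss d) = (\<integral>\<^sup>+ g. (\<Prod>i<d. F i (g i)) \<partial>PiM {..<d} (\<lambda>_. N))"
    unfolding gauss_def N_def F_def by (subst restrict) (simp add: prod.inter_restrict)
  also have "\<dots> = (\<Prod>i<d. integral\<^sup>N N (F i))"
    by (rule product_nn_integral_prod) (simp_all add: N_def)
  also have "\<dots> = (\<Prod>i\<in>I. integral\<^sup>N N (f i))"
    by (subst restrict, subst prod.inter_restrict)
      (auto intro!: prod.cong simp: F_def[abs_def] prob_space.emeasure_space_1[OF N])
  finally show ?thesis unfolding N_def .
qed

lemma gauss_sum_squares_le_bound:
  fixes v :: "nat \<Rightarrow> real" and a b t :: real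
  assumes "I \<subseteq> {..<d}" and "t > 0"
  defines "u \<equiv> 1 + 2 * t * b\<^sup>2"
  shows "emeasure (gauss d) {g \<in> space (gauss d). (\<Sum>i\<in>I. (v i + b * g i)\<^sup>2) \<le> a}
       \<le> ennreal (exp (t * a - (\<Sum>i\<in>I. ln u / 2 + t * (v i)\<^sup>2 / u)))"
proof -
  have fin: "finite I" using assms(1) finite_subset by blast
  have [measurable]: "(\<lambda>g. g i) \<in> borel_measurable (gauss d)" if "i \<in> I" for i
    using that assms(1) by auto
  have "emeasure (gauss d) {g \<in> space (gauss d). (\<Sum>i\<in>I. (v i + b * g i)\<^sup>2) \<le> a}
      \<le> ennreal (exp (t * a)) * (\<integral>\<^sup>+ g. ennreal (exp (- t * (\<Sum>i\<in>I. (v i + b * g i)\<^sup>2)))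
            * indicator (space (gauss d)) g \<partial>gauss d)"
    using assms(2) by (intro Chernoff_ineq_nn_integral_le) measurable
  also have "(\<integral>\<^sup>+ g. ennreal (exp (- t * (\<Sum>i\<in>I. (v i + b * g i)\<^sup>2)))
            * indicator (space (gauss d)) g \<partial>gauss d)
      = (\<integral>\<^sup>+ g. (\<Prod>i\<in>I. ennreal (exp (- t * (v i + b * g i)\<^sup>2))) \<partial>gauss d)"
    using fin by (intro nn_integral_cong)
      (simp add: sum_distrib_left exp_sum prod_ennreal flip: sum_negf)
  also have "\<dots> = (\<Prod>i\<in>I. \<integral>\<^sup>+ z. ennreal (exp (- t * (v i + b * z)\<^sup>2)) \<partial>density lborel std_normal_density)"
    by (rule nn_integral_gauss_prod[OF assms(1)]) simp
  also have "\<dots> = (\<Prod>i\<in>I. ennreal (exp (- ln u / 2 - t * (v i)\<^sup>2 / u)))"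
    unfolding u_def using assms(2) by (intro prod.cong refl nn_integral_std_normal_exp_neg_square) simp
  also have "ennreal (exp (t * a)) * \<dots> = ennreal (exp (t * a - (\<Sum>i\<in>I. ln u / 2 + t * (v i)\<^sup>2 / u)))"
  proof -
    have exponent: "t * a - (\<Sum>i\<in>I. ln u / 2 + t * (v i)\<^sup>2 / u)
        = t * a + (\<Sum>i\<in>I. - ln u / 2 - t * (v i)\<^sup>2 / u)"
      by (simp add: sum_negf[symmetric])
    show ?thesis
      unfolding exponent exp_add exp_sum[OF fin] by (simp add: prod_ennreal ennreal_mult prod_nonneg)
  qed
  finally show ?thesis .
qed

lemma mat_mul_Amat_Amat:
  assumes "i < d" "j < d"
  shows "mat_mul d (Amat \<kappa>) (Amat \<kappa>) i j = (if i = j then (if i = 0 then 1 else \<kappa>\<^sup>2) else 0)"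
proof -
  have "mat_mul d (Amat \<kappa>) (Amat \<kappa>) i j = (\<Sum>k<d. if k = i then Amat \<kappa> i i * Amat \<kappa> i j else 0)"
    unfolding mat_mul_def by (rule sum.cong) (auto simp: Amat_def)
  also have "\<dots> = Amat \<kappa> i i * Amat \<kappa> i j" using assms by simp
  finally show ?thesis by (auto simp: Amat_def power2_eq_square)
qed

lemma Mnorm_Amat_squared:
  assumes "0 < d"
  shows "(Mnorm d (mat_mul d (Amat \<kappa>) (Amat \<kappa>)) z)\<^sup>2 = (z 0)\<^sup>2 + \<kappa>\<^sup>2 * (\<Sum>i\<in>{1..<d}. (z i)\<^sup>2)"
proof -
  have row: "(\<Sum>j<d. z i * mat_mul d (Amat \<kappa>) (Amat \<kappa>) i j * z j) = (if i = 0 then 1 else \<kappa>\<^sup>2) * (z i)\<^sup>2"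
    if "i < d" for i
    using that by (simp add: mat_mul_Amat_Amat if_distrib[of "\<lambda>m. z i * m * _"] power2_eq_square
        sum.delta cong: if_cong)
  have split: "{..<d} = insert 0 {1..<d}" using assms by auto
  have "(\<Sum>i<d. \<Sum>j<d. z i * mat_mul d (Amat \<kappa>) (Amat \<kappa>) i j * z j)
      = (\<Sum>i<d. (if i = 0 then 1 else \<kappa>\<^sup>2) * (z i)\<^sup>2)"
    by (rule sum.cong) (simp_all add: row)
  also have "\<dots> = (z 0)\<^sup>2 + \<kappa>\<^sup>2 * (\<Sum>i\<in>{1..<d}. (z i)\<^sup>2)"
    unfolding split by (simp add: sum_distrib_left)
  moreover have "0 \<le> (z 0)\<^sup>2 + \<kappa>\<^sup>2 * (\<Sum>i\<in>{1..<d}. (z i)\<^sup>2)"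
    by (intro add_nonneg_nonneg mult_nonneg_nonneg sum_nonneg) auto
  ultimately show ?thesis unfolding Mnorm_def by simp
qed

lemma one_minus_square_div_le:
  fixes \<alpha> u :: real
  assumes "0 \<le> u"
  shows "1 - (1 - \<alpha>)\<^sup>2 / (1 + u) \<le> u + 2 * \<bar>\<alpha>\<bar>"
proof -
  have "(1 + u) - (1 - \<alpha>)\<^sup>2 = u + 2 * \<alpha> - \<alpha>\<^sup>2"
    by (simp add: power2_eq_square algebra_simps)
  also have "\<dots> \<le> u + 2 * \<bar>\<alpha>\<bar>"
    using abs_ge_self[of \<alpha>] zero_le_power2[of \<alpha>] by linarith
  also have "\<dots> \<le> (u + 2 * \<bar>\<alpha>\<bar>) * (1 + u)"
    using assms by (simp add: algebra_simps)
  finally show ?thesis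
    using assms by (simp add: field_simps)
qed

lemma chernoff_exponent_le:
  fixes D L \<kappa> \<beta> \<alpha> X u :: real
  assumes D: "1 \<le> D" and L: "1 \<le> L" and \<kappa>: "10 \<le> \<kappa>" and \<beta>: "0 < \<beta>"
    and X: "0 \<le> X" "X \<le> 2 * D / (3 * \<kappa>)" and \<alpha>: "\<bar>\<alpha>\<bar> \<le> 3/5 * \<beta>\<^sup>2 * \<kappa>"
    and u: "0 < u" "u \<le> 1/20" "u \<le> \<kappa> * \<beta>\<^sup>2 / 20" and uD: "200 * L \<le> u * D"
  defines "t \<equiv> u / (2 * \<beta>\<^sup>2)"
  shows "t * (X + 25 * L / \<kappa>\<^sup>2 + \<beta>\<^sup>2 * D / 50)
           - ((D - 1) * ln (1 + u) / 2 + t * (1 - \<alpha>)\<^sup>2 * X / (1 + u)) \<le> - 5 * L"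
proof -
  have t: "0 \<le> t" using u unfolding t_def by simp
  have tX: "t * X \<le> u * D / (3 * \<kappa> * \<beta>\<^sup>2)"
  proof -
    have "t * X \<le> t * (2 * D / (3 * \<kappa>))" using t X by (intro mult_left_mono)
    also have "\<dots> = u * D / (3 * \<kappa> * \<beta>\<^sup>2)" unfolding t_def using \<kappa> \<beta> by (simp add: field_simps)
    finally show ?thesis .
  qed
  have tX_u: "t * X * u \<le> u * D / 60"
  proof -
    have "t * X * u \<le> u * D / (3 * \<kappa> * \<beta>\<^sup>2) * (\<kappa> * \<beta>\<^sup>2 / 20)"
      using tX u t X D \<kappa> by (intro mult_mono) auto
    also have "\<dots> = u * D / 60" using \<kappa> \<beta> by (simp add: field_simps)
    finally show ?thesis .
  qed
  have tX_\<alpha>: "t * X * (2 * \<bar>\<alpha>\<bar>) \<le> 2/5 * u * D"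
  proof -
    have "t * X * (2 * \<bar>\<alpha>\<bar>) \<le> u * D / (3 * \<kappa> * \<beta>\<^sup>2) * (2 * (3/5 * \<beta>\<^sup>2 * \<kappa>))"
      using tX \<alpha> t X u D \<kappa> by (intro mult_mono) auto
    also have "\<dots> = 2/5 * u * D" using \<kappa> \<beta> by (simp add: field_simps)
    finally show ?thesis .
  qed
  have drift: "t * X - t * (1 - \<alpha>)\<^sup>2 * X / (1 + u) \<le> 5/12 * (u * D)"
  proof -
    have "t * X - t * (1 - \<alpha>)\<^sup>2 * X / (1 + u) = t * X * (1 - (1 - \<alpha>)\<^sup>2 / (1 + u))"
      by (simp add: algebra_simps)
    also have "\<dots> \<le> t * X * (u + 2 * \<bar>\<alpha>\<bar>)"
      using t X u by (intro mult_left_mono one_minus_square_div_le) auto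
    finally show ?thesis using tX_u tX_\<alpha> by (simp add: algebra_simps)
  qed
  have first: "t * (25 * L / \<kappa>\<^sup>2) \<le> L / 16"
  proof -
    have "t * (25 * L / \<kappa>\<^sup>2) \<le> \<kappa> * \<beta>\<^sup>2 / 20 / (2 * \<beta>\<^sup>2) * (25 * L / \<kappa>\<^sup>2)"
      unfolding t_def using u \<beta> L by (intro mult_right_mono divide_right_mono) auto
    also have "\<dots> = 5 * L / (8 * \<kappa>)" using \<kappa> \<beta> by (simp add: field_simps power2_eq_square)
    also have "\<dots> \<le> L / 16" using \<kappa> L by (simp add: field_simps)
    finally show ?thesis .
  qed
  have margin: "t * (\<beta>\<^sup>2 * D / 50) = (u * D) / 100"
    unfolding t_def using \<beta> by (simp add: field_simps)
  have entropy: "(D - 1) * ln (1 + u) / 2 \<ge> u * D / 2 - u * D / 40 - 1/40"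
  proof -
    have "(D - 1) * (u - u\<^sup>2) \<le> (D - 1) * ln (1 + u)"
      using D u by (intro mult_left_mono ln_one_plus_pos_lower_bound) auto
    moreover have "(D - 1) * (u - u\<^sup>2) = u * D - D * u\<^sup>2 - u + u\<^sup>2"
      by (simp add: algebra_simps)
    moreover have "D * u\<^sup>2 \<le> u * D / 20"
      using mult_left_mono[of "u * u" "u / 20" D] u D by (simp add: power2_eq_square)
    moreover have "0 \<le> u\<^sup>2" by simp
    ultimately show ?thesis using u by linarith
  qed
  have "t * (X + 25 * L / \<kappa>\<^sup>2 + \<beta>\<^sup>2 * D / 50) = t * X + t * (25 * L / \<kappa>\<^sup>2) + t * (\<beta>\<^sup>2 * D / 50)"
    by (simp add: distrib_left)
  then show ?thesis using drift first margin entropy uD L by linarith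
qed

lemma ln_ge_one_of_ge_3: "3 \<le> d \<Longrightarrow> 1 \<le> ln (real d)"
  using exp_le ln_ge_iff[of "real d" 1] by simp

lemma gauss_tail_energy_small_prob:
  fixes x :: "nat \<Rightarrow> real" and \<kappa> \<alpha> \<beta> :: real
  assumes d: "3 \<le> d" "4000 * ln (real d) \<le> real d" and \<kappa>: "10 \<le> \<kappa>" and \<beta>: "0 < \<beta>"
    and \<alpha>: "\<bar>\<alpha>\<bar> \<le> 3/5 * \<beta>\<^sup>2 * \<kappa>" and signal: "4900 * ln (real d) \<le> \<kappa> * \<beta>\<^sup>2 * real d"
    and X: "(\<Sum>i\<in>{1..<d}. (x i)\<^sup>2) \<le> 2 * real d / (3 * \<kappa>)"
  shows "measure (gauss d) {g \<in> space (gauss d).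
           (\<Sum>i\<in>{1..<d}. ((1 - \<alpha>) * x i + \<beta> * g i)\<^sup>2)
             \<le> (\<Sum>i\<in>{1..<d}. (x i)\<^sup>2) + 25 * ln (real d) / \<kappa>\<^sup>2 + \<beta>\<^sup>2 * real d / 50}
         \<le> real d powr -5"
proof -
  define L where "L = ln (real d)"
  define X where "X = (\<Sum>i\<in>{1..<d}. (x i)\<^sup>2)"
  define u where "u = min (1/20) (\<kappa> * \<beta>\<^sup>2 / 20)"
  define t where "t = u / (2 * \<beta>\<^sup>2)"
  have L: "1 \<le> L" unfolding L_def using d(1) by (rule ln_ge_one_of_ge_3)
  have u: "0 < u" "u \<le> 1/20" "u \<le> \<kappa> * \<beta>\<^sup>2 / 20" using \<kappa> \<beta> unfolding u_def by auto
  have uD: "200 * L \<le> u * real d"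
    using d signal L unfolding u_def L_def by (cases "1/20 \<le> \<kappa> * \<beta>\<^sup>2 / 20") auto
  have t: "0 < t" and tu: "1 + 2 * t * \<beta>\<^sup>2 = 1 + u" using u \<beta> unfolding t_def by auto
  have exponent: "t * (X + 25 * L / \<kappa>\<^sup>2 + \<beta>\<^sup>2 * real d / 50)
      - (\<Sum>i\<in>{1..<d}. ln (1 + 2 * t * \<beta>\<^sup>2) / 2 + t * ((1 - \<alpha>) * x i)\<^sup>2 / (1 + 2 * t * \<beta>\<^sup>2))
    \<le> - 5 * L"
  proof -
    have "(\<Sum>i\<in>{1..<d}. ln (1 + 2 * t * \<beta>\<^sup>2) / 2 + t * ((1 - \<alpha>) * x i)\<^sup>2 / (1 + 2 * t * \<beta>\<^sup>2))
        = (real d - 1) * ln (1 + u) / 2 + t * (1 - \<alpha>)\<^sup>2 * X / (1 + u)"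
      using d unfolding tu X_def
      by (simp add: sum.distrib power_mult_distrib sum_distrib_left sum_divide_distrib of_nat_diff mult.assoc)
    moreover have "0 \<le> X" unfolding X_def by (simp add: sum_nonneg)
    ultimately show ?thesis
      using chernoff_exponent_le[of "real d" L \<kappa> \<beta> X \<alpha> u] d L \<kappa> \<beta> X \<alpha> u uD
      unfolding t_def X_def by simp
  qed
  define bad where "bad = {g \<in> space (gauss d). (\<Sum>i\<in>{1..<d}. ((1 - \<alpha>) * x i + \<beta> * g i)\<^sup>2)
      \<le> X + 25 * L / \<kappa>\<^sup>2 + \<beta>\<^sup>2 * real d / 50}"
  interpret prob_space "gauss d" by (rule prob_space_gauss)
  have "emeasure (gauss d) bad
      \<le> ennreal (exp (t * (X + 25 * L / \<kappa>\<^sup>2 + \<beta>\<^sup>2 * real d / 50)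
      - (\<Sum>i\<in>{1..<d}. ln (1 + 2 * t * \<beta>\<^sup>2) / 2 + t * ((1 - \<alpha>) * x i)\<^sup>2 / (1 + 2 * t * \<beta>\<^sup>2))))"
    unfolding bad_def by (rule gauss_sum_squares_le_bound[OF _ t]) auto
  also have "\<dots> \<le> ennreal (exp (- 5 * L))"
    using exponent by (intro ennreal_leI) simp
  also have "exp (- 5 * L) = real d powr -5"
    unfolding L_def powr_def using d by simp
  finally show ?thesis
    unfolding bad_def X_def L_def by (simp add: emeasure_eq_measure)
qed

lemma energy_descent_fixed_dimension:
  fixes x :: "nat \<Rightarrow> real"
  assumes d: "3 \<le> d" "4000 * ln (real d) \<le> real d" and \<kappa>: "10 \<le> \<kappa>" and h: "0 < h" and \<beta>: "0 < \<beta>m"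
    and \<alpha>: "\<bar>\<alpha>m\<bar> \<le> 3/5 * \<beta>m\<^sup>2 * \<kappa>" and signal: "4900 * ln (real d) \<le> \<kappa> * \<beta>m\<^sup>2 * real d"
    and tail: "norm_tail d x \<le> sqrt (2 * real d / (3 * \<kappa>))" and head: "\<bar>x 0\<bar> \<le> 5 * sqrt (ln (real d))"
  shows "measure (gauss d)
           {g \<in> space (gauss d).
              h / 4 * (Mnorm d (mat_mul d (Amat \<kappa>) (Amat \<kappa>)) x)\<^sup>2
              - h / 4 * (Mnorm d (mat_mul d (Amat \<kappa>) (Amat \<kappa>)) (ystep \<alpha>1 \<alpha>m \<beta>1 \<beta>m x g))\<^sup>2
              \<le> - (1/200) * h * \<kappa>\<^sup>2 * \<beta>m\<^sup>2 * real d}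
         \<ge> 1 - real d powr -5"
proof -
  let ?M = "mat_mul d (Amat \<kappa>) (Amat \<kappa>)"
  define X where "X = (\<Sum>i\<in>{1..<d}. (x i)\<^sup>2)"
  define S where "S g = (\<Sum>i\<in>{1..<d}. ((1 - \<alpha>m) * x i + \<beta>m * g i)\<^sup>2)" for g :: "nat \<Rightarrow> real"
  define bad where "bad = {g \<in> space (gauss d). S g \<le> X + 25 * ln (real d) / \<kappa>\<^sup>2 + \<beta>m\<^sup>2 * real d / 50}"
  define good where "good = {g \<in> space (gauss d). h / 4 * (Mnorm d ?M x)\<^sup>2 - h / 4 * (Mnorm d ?M (ystep \<alpha>1 \<alpha>m \<beta>1 \<beta>m x g))\<^sup>2
      \<le> - (1/200) * h * \<kappa>\<^sup>2 * \<beta>m\<^sup>2 * real d}"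
  interpret prob_space "gauss d" by (rule prob_space_gauss)
  have X: "X \<le> 2 * real d / (3 * \<kappa>)"
    using tail unfolding norm_tail_def X_def[symmetric] by simp
  have head2: "(x 0)\<^sup>2 \<le> 25 * ln (real d)"
    using power_mono[OF head abs_ge_zero, of 2] d(1) ln_ge_one_of_ge_3[OF d(1)]
    by (simp add: power_mult_distrib)
  have bad: "measure (gauss d) bad \<le> real d powr -5"
    using gauss_tail_energy_small_prob[OF d \<kappa> \<beta> \<alpha> signal X[unfolded X_def]]
    unfolding bad_def S_def X_def .
  have "space (gauss d) - bad \<subseteq> good"
  proof
    fix g assume g: "g \<in> space (gauss d) - bad"
    then have "\<kappa>\<^sup>2 * (X + 25 * ln (real d) / \<kappa>\<^sup>2 + \<beta>m\<^sup>2 * real d / 50) \<le> \<kappa>\<^sup>2 * S g"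
      unfolding bad_def by (intro mult_left_mono) auto
    moreover have "\<kappa>\<^sup>2 * (X + 25 * ln (real d) / \<kappa>\<^sup>2 + \<beta>m\<^sup>2 * real d / 50) = \<kappa>\<^sup>2 * X + 25 * ln (real d) + \<kappa>\<^sup>2 * \<beta>m\<^sup>2 * real d / 50"
      using \<kappa> by (simp add: field_simps)
    ultimately have "(x 0)\<^sup>2 + \<kappa>\<^sup>2 * X - (((1 - \<alpha>1) * x 0 + \<beta>1 * g 0)\<^sup>2 + \<kappa>\<^sup>2 * S g)
        \<le> - (\<kappa>\<^sup>2 * \<beta>m\<^sup>2 * real d / 50)"
      using head2 zero_le_power2[of "(1 - \<alpha>1) * x 0 + \<beta>1 * g 0"] by linarith
    moreover have "(Mnorm d ?M x)\<^sup>2 = (x 0)\<^sup>2 + \<kappa>\<^sup>2 * X"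
      using Mnorm_Amat_squared d unfolding X_def by simp
    moreover have "(Mnorm d ?M (ystep \<alpha>1 \<alpha>m \<beta>1 \<beta>m x g))\<^sup>2 = ((1 - \<alpha>1) * x 0 + \<beta>1 * g 0)\<^sup>2 + \<kappa>\<^sup>2 * S g"
      using Mnorm_Amat_squared d unfolding S_def by (simp add: ystep_def)
    ultimately have "(Mnorm d ?M x)\<^sup>2 - (Mnorm d ?M (ystep \<alpha>1 \<alpha>m \<beta>1 \<beta>m x g))\<^sup>2
        \<le> - (\<kappa>\<^sup>2 * \<beta>m\<^sup>2 * real d / 50)"
      by simp
    then have "h / 4 * ((Mnorm d ?M x)\<^sup>2 - (Mnorm d ?M (ystep \<alpha>1 \<alpha>m \<beta>1 \<beta>m x g))\<^sup>2)
        \<le> h / 4 * - (\<kappa>\<^sup>2 * \<beta>m\<^sup>2 * real d / 50)"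
      using h by (intro mult_left_mono) auto
    then show "g \<in> good"
      using g unfolding good_def by (simp add: algebra_simps)
  qed
  moreover have "bad \<in> sets (gauss d)" "good \<in> sets (gauss d)"
    unfolding bad_def good_def S_def Mnorm_def ystep_def by measurable
  ultimately show ?thesis
    using bad prob_compl[of bad] finite_measure_mono[of "space (gauss d) - bad" good]
    unfolding good_def by linarith
qed

lemma noise_level_lower_bound:
  fixes d :: nat and \<kappa> \<beta> :: real
  assumes d: "3 \<le> d" and \<kappa>: "0 < \<kappa>" and \<beta>: "0 \<le> \<beta>"
    and noise: "70 \<le> \<beta> * sqrt (\<kappa> * real d / ln (real d))"
  shows "0 < \<beta>" and "4900 * ln (real d) \<le> \<kappa> * \<beta>\<^sup>2 * real d"
proof -
  have L: "1 \<le> ln (real d)" using d by (rule ln_ge_one_of_ge_3)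
  show "0 < \<beta>" using noise \<beta> by (cases "\<beta> = 0") auto
  have "70\<^sup>2 \<le> (\<beta> * sqrt (\<kappa> * real d / ln (real d)))\<^sup>2"
    using noise by (intro power_mono) auto
  also have "\<dots> = \<kappa> * \<beta>\<^sup>2 * real d / ln (real d)"
    using \<kappa> L by (simp add: power_mult_distrib)
  finally show "4900 * ln (real d) \<le> \<kappa> * \<beta>\<^sup>2 * real d"
    using L by (simp add: field_simps)
qed

theorem proposition1:
  fixes C :: real and R :: "nat \<Rightarrow> real"
  assumes "filterlim R at_top sequentially"
  shows "\<exists>c>0. \<exists>d0::nat. \<forall>d\<ge>d0. \<forall>\<kappa>::real. \<forall>h::real. \<forall>\<alpha>1 \<alpha>m \<beta>1 \<beta>m :: real. \<forall>x :: nat \<Rightarrow> real.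
     \<kappa> \<ge> 10 \<and> h > 0 \<and> \<beta>1 \<ge> 0 \<and> \<beta>m \<ge> 0 \<and>
     \<bar>\<alpha>m\<bar> \<le> 3/5 * \<beta>m\<^sup>2 * \<kappa> \<and> \<bar>\<alpha>1\<bar> \<le> C * \<bar>\<alpha>m\<bar> \<and> \<beta>1 \<le> C * \<beta>m \<and>
     \<beta>m * sqrt (\<kappa> * real d / ln (real d)) \<ge> R d \<and>
     norm_tail d x \<le> sqrt (2 * real d / (3 * \<kappa>)) \<and> \<bar>x 0\<bar> \<le> 5 * sqrt (ln (real d))
     \<longrightarrow> measure (gauss d)
           {g \<in> space (gauss d).
              h / 4 * (Mnorm d (mat_mul d (Amat \<kappa>) (Amat \<kappa>)) x)\<^sup>2
              - h / 4 * (Mnorm d (mat_mul d (Amat \<kappa>) (Amat \<kappa>)) (ystep \<alpha>1 \<alpha>m \<beta>1 \<beta>m x g))\<^sup>2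
              \<le> - c * h * \<kappa>\<^sup>2 * \<beta>m\<^sup>2 * real d}
         \<ge> 1 - real d powr (-5)"
proof -
  have "eventually (\<lambda>d. 70 \<le> R d) sequentially"
    using assms by (simp add: filterlim_at_top)
  moreover have "eventually (\<lambda>d::nat. 4000 * ln (real d) \<le> real d) sequentially"
    by real_asymp
  moreover have "eventually (\<lambda>d::nat. 3 \<le> d) sequentially"
    by (rule eventually_ge_at_top)
  ultimately have "eventually (\<lambda>d. 70 \<le> R d \<and> 4000 * ln (real d) \<le> real d \<and> 3 \<le> d) sequentially"
    by eventually_elim simp
  then obtain d0 where d0: "\<And>d. d \<ge> d0 \<Longrightarrow> 70 \<le> R d \<and> 4000 * ln (real d) \<le> real d \<and> 3 \<le> d"
    unfolding eventually_sequentially by blast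
  show ?thesis
  proof (intro exI[of _ "1/200"] conjI exI[of _ d0] allI impI, goal_cases)
    case (2 d \<kappa> h \<alpha>1 \<alpha>m \<beta>1 \<beta>m x)
    then have d: "3 \<le> d" "4000 * ln (real d) \<le> real d"
      and "70 \<le> \<beta>m * sqrt (\<kappa> * real d / ln (real d))"
      using d0[of d] by auto
    with 2 have "0 < \<beta>m" "4900 * ln (real d) \<le> \<kappa> * \<beta>m\<^sup>2 * real d"
      using noise_level_lower_bound[of d \<kappa> \<beta>m] by auto
    with d 2 show ?case
      by (intro energy_descent_fixed_dimension) auto
  qed simp
qed

end
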